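(* Consider the sequences $(x_k),(y_k),(\nu_k),(\lambda_k)$ generated by Algorithm 2 (described in the context), and let $A$, $K$ and $(i_k)$ be as defined in the context. Set $\sigma:=\frac{2\hat\theta}{\eta L}$. Then $\sigma<1$ and, for all $k\in K$, $$\nu_{i_k}\in N_C(y_{i_k}),$$ $$\big\|\lambda_{i_k}(F(y_{i_k})+\nu_{i_k})+y_{i_k}-x_{i_{k-1}}\big\|\le\sigma\|y_{i_k}-x_{i_{k-1}}\|,$$ $$\lambda_{i_k}\|y_{i_k}-x_{i_{k-1}}\|\ge\eta,$$ $$x_{i_k}=x_{i_{k-1}}-\tau\lambda_{i_k}(F(y_{i_k})+\nu_{i_k}).$$ Consequently, the sequences $(x_{i_k})_{k\in K}$, $(y_{i_k})_{k\in K}$, $(\lambda_{i_k})_{k\in K}$ (with $x_{i_0}=x_0$) are generated by the large-step under-relaxed HPE method (Algorithm 1 in the context) with parameters $\tau$, $\sigma$, $\eta$ and $N=\#A$.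
   Context: Setting: $\mathcal H$ real Hilbert space; $C\subseteq\mathcal H$ nonempty closed convex; $N_C(x)=\{\nu:\langle\nu,y-x\rangle\le0\ \forall y\in C\}$ if $x\in C$, $N_C(x)=\emptyset$ otherwise. $F:C\to\mathcal H$ is monotone, continuously differentiable, and $\|F'(x)-F'(y)\|\le L\|x-y\|$ for all $x,y\in C$, with $L>0$; the set of $x$ with $0\in F(x)+N_C(x)$ is nonempty. For $y\in C$, $F_y(x):=F(y)+F'(y)(x-y)$. Parameters: $0\le\hat\sigma<1/2$; $0<\theta<(1-\hat\sigma)(1-2\hat\sigma)$; $\hat\theta:=\theta\big(\frac{\hat\sigma}{1-\hat\sigma}+\frac{\theta}{(1-\hat\sigma)^2}\big)$; $\eta>2\hat\theta/L$; $\tau:=\dfrac{2(\theta-\hat\theta)}{2\theta+\frac{\eta L}{2}+\sqrt{(2\theta+\frac{\eta L}{2})^2-4\theta(\theta-\hat\theta)}}$ (one has $0<\tau<1$). Algorithm 2: input $x_0\in C$, $y_0:=x_0$, $\nu_0:=0$, $\lambda_1>0$ with $\lambda_1^2\|F(y_0)\|\le2\theta/L$. For $k=1,2,\dots$: if $F(y_{k-1})+\nu_{k-1}=0$, stop and return $y_{k-1}$. If $\frac{\lambda_kL}{2}\|\lambda_k(F(y_{k-1})+\nu_{k-1})+y_{k-1}-x_{k-1}\|\le\hat\theta$, set $y_k=y_{k-1}$, $\nu_k=\nu_{k-1}$; otherwise find any $(y_k,\nu_k)$ with $\nu_k\in N_C(y_k)$ and $\|\lambda_k(F_{y_{k-1}}(y_k)+\nu_k)+y_k-x_{k-1}\|\le\hat\sigma\|y_k-y_{k-1}\|$.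 Then, if $\lambda_k\|y_k-x_{k-1}\|\ge\eta$, set $x_k=x_{k-1}-\tau\lambda_k(F(y_k)+\nu_k)$ and $\lambda_{k+1}=(1-\tau)\lambda_k$; else set $x_k=x_{k-1}$ and $\lambda_{k+1}=\lambda_k/(1-\tau)$. Standing assumption: the algorithm never stops at the first test, i.e. $F(y_{k-1})+\nu_{k-1}\neq0$ for all $k$. Index sets: $A=\{k\ge1:\lambda_k\|y_k-x_{k-1}\|\ge\eta\}$; $K=\{k\ge1: k\le\#A\}$; $i_0=0$ and $i_k$ is the $k$-th element of $A$ (in increasing order), so $A=\{i_k:k\in K\}$. Algorithm 1 (large-step under-relaxed HPE method) with input $x_0\in\mathcal H$, $0<\tau<1$, $0\le\sigma<1$, $\eta>0$, $N\in\mathbb N\cup\{\infty\}$: for $k=1,\dots,N$, choose $\lambda_k>0$ and $y_k\in\mathcal H$, $\nu_k\in N_C(y_k)$ with $\|\lambda_k(F(y_k)+\nu_k)+y_k-x_{k-1}\|\le\sigma\|y_k-x_{k-1}\|$ and $\lambda_k\|y_k-x_{k-1}\|\ge\eta$, and set $x_k=x_{k-1}-\tau\lambda_k(F(y_k)+\nu_k)$. *)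

theory Defs
  imports "HOL-Analysis.Analysis" "HOL-Library.Infinite_Set" "HOL-Library.Extended_Nat"
begin

definition normal_cone :: "'a::real_inner set \<Rightarrow> 'a \<Rightarrow> 'a set" where
  "normal_cone C x = (if x \<in> C then {v. \<forall>y\<in>C. inner v (y - x) \<le> 0} else {})"

definition linearization :: "('a::real_vector \<Rightarrow> 'a) \<Rightarrow> ('a \<Rightarrow> 'a \<Rightarrow> 'a) \<Rightarrow> 'a \<Rightarrow> 'a \<Rightarrow> 'a" where
  "linearization F F' y x = F y + F' y (x - y)"

definition theta_hat :: "real \<Rightarrow> real \<Rightarrow> real" where
  "theta_hat sh th = th * (sh / (1 - sh) + th / (1 - sh)^2)"

definition tau_param :: "real \<Rightarrow> real \<Rightarrow> real \<Rightarrow> real \<Rightarrow> real" where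
  "tau_param sh th eta L =
     (let thh = theta_hat sh th in
      2 * (th - thh) /
        (2 * th + eta * L / 2 + sqrt ((2 * th + eta * L / 2)^2 - 4 * th * (th - thh))))"

text \<open>Sequences (x_k, y_k, nu_k, lambda_k) generated by Algorithm 2
  (with the standing assumption that the first stopping test never fires).\<close>
definition algorithm2 ::
  "'a::real_inner set \<Rightarrow> ('a \<Rightarrow> 'a) \<Rightarrow> ('a \<Rightarrow> 'a \<Rightarrow> 'a) \<Rightarrow> real \<Rightarrow> real \<Rightarrow> real \<Rightarrow> real \<Rightarrow>
   (nat \<Rightarrow> 'a) \<Rightarrow> (nat \<Rightarrow> 'a) \<Rightarrow> (nat \<Rightarrow> 'a) \<Rightarrow> (nat \<Rightarrow> real) \<Rightarrow> bool" where
  "algorithm2 C F F' L sh th eta x y nu lam \<longleftrightarrow>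
     (let thh = theta_hat sh th; tau = tau_param sh th eta L in
      x 0 \<in> C \<and> y 0 = x 0 \<and> nu 0 = 0 \<and> lam 1 > 0 \<and>
      (lam 1)^2 * norm (F (y 0)) \<le> 2 * th / L \<and>
      (\<forall>k\<ge>1.
         (if lam k * L / 2 * norm (lam k *\<^sub>R (F (y (k-1)) + nu (k-1)) + y (k-1) - x (k-1)) \<le> thh
          then y k = y (k-1) \<and> nu k = nu (k-1)
          else nu k \<in> normal_cone C (y k) \<and>
               norm (lam k *\<^sub>R (linearization F F' (y (k-1)) (y k) + nu k) + y k - x (k-1))
                 \<le> sh * norm (y k - y (k-1))) \<and>
         (if lam k * norm (y k - x (k-1)) \<ge> eta
          then x k = x (k-1) - (tau * lam k) *\<^sub>R (F (y k) + nu k) \<and> lam (k+1) = (1 - tau) * lam k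
          else x k = x (k-1) \<and> lam (k+1) = lam k / (1 - tau))))"

definition hpe_run ::
  "'a::real_inner set \<Rightarrow> ('a \<Rightarrow> 'a) \<Rightarrow> real \<Rightarrow> real \<Rightarrow> real \<Rightarrow> enat \<Rightarrow>
   (nat \<Rightarrow> 'a) \<Rightarrow> (nat \<Rightarrow> 'a) \<Rightarrow> (nat \<Rightarrow> 'a) \<Rightarrow> (nat \<Rightarrow> real) \<Rightarrow> bool" where
  "hpe_run C F tau sg eta N x y nu lam \<longleftrightarrow>
     0 < tau \<and> tau < 1 \<and> 0 \<le> sg \<and> sg < 1 \<and> eta > 0 \<and>
     (\<forall>k. 1 \<le> k \<and> enat k \<le> N \<longrightarrow>
        lam k > 0 \<and> nu k \<in> normal_cone C (y k) \<and>
        norm (lam k *\<^sub>R (F (y k) + nu k) + y k - x (k-1)) \<le> sg * norm (y k - x (k-1)) \<and>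
        lam k * norm (y k - x (k-1)) \<ge> eta \<and>
        x k = x (k-1) - (tau * lam k) *\<^sub>R (F (y k) + nu k))"

definition large_steps :: "(nat \<Rightarrow> 'a::real_normed_vector) \<Rightarrow> (nat \<Rightarrow> 'a) \<Rightarrow> (nat \<Rightarrow> real) \<Rightarrow> real \<Rightarrow> nat set" where
  "large_steps x y lam eta = {k. k \<ge> 1 \<and> lam k * norm (y k - x (k-1)) \<ge> eta}"

definition ecard :: "nat set \<Rightarrow> enat" where
  "ecard S = (if finite S then enat (card S) else \<infinity>)"

definition idx :: "nat set \<Rightarrow> nat \<Rightarrow> nat" where
  "idx S k = (if k = 0 then 0 else enumerate S (k - 1))"

end

theory Submission
  imports Defs
begin

text \<open>Along Algorithm 2 the quantity
  \<open>\<rho>\<^sub>k = \<lambda>\<^sub>k\<^sub>+\<^sub>1 L / 2 \<cdot> \<parallel>\<lambda>\<^sub>k\<^sub>+\<^sub>1 (F(y\<^sub>k) + \<nu>\<^sub>k) + y\<^sub>k - x\<^sub>k\<parallel>\<close> never exceeds \<open>\<theta>\<close>.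
  An inexact Newton step started from \<open>\<rho> \<le> \<theta>\<close> brings it down to \<open>\<hat>\<theta>\<close>: monotonicity of \<open>F\<close>
  (hence of \<open>F'\<close>) and of the normal cone bounds the step length, and the quadratic Taylor
  bound for the Lipschitz derivative bounds the new residual. The subsequent update of \<open>\<lambda>\<close>
  raises \<open>\<rho>\<close> again by at most what the choice of \<open>\<tau>\<close> allows, so \<open>\<rho> \<le> \<theta>\<close> is restored.
  At a large step, \<open>\<lambda> \<parallel>y - x\<parallel> \<ge> \<eta>\<close> turns \<open>\<rho> \<le> \<hat>\<theta>\<close> into the HPE relative error condition
  with \<open>\<sigma> = 2\<hat>\<theta> / (\<eta> L)\<close>, and between two large steps \<open>x\<close> does not move.\<close>

lemma linearization_error_bound:
  fixes F :: "'a::real_inner \<Rightarrow> 'a"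
  assumes C: "convex C"
    and F_deriv: "\<forall>u\<in>C. (F has_derivative F' u) (at u within C)"
    and F'_lin: "\<forall>u\<in>C. bounded_linear (F' u)"
    and F'_lip: "\<forall>u\<in>C. \<forall>v\<in>C. onorm (\<lambda>w. F' u w - F' v w) \<le> L * norm (u - v)"
    and x: "x \<in> C" and y: "y \<in> C"
  shows "norm (F y - linearization F F' x y) \<le> L / 2 * norm (y - x)^2"
proof -
  define p where "p t = x + t *\<^sub>R (y - x)" for t
  define R where "R t = F (p t) - t *\<^sub>R F' x (y - x)" for t
  have p_in: "p t \<in> C" if "t \<in> {0..1}" for t
  proof -
    have "p t = (1 - t) *\<^sub>R x + t *\<^sub>R y" by (simp add: p_def algebra_simps)
    then show ?thesis using that C x y by (simp add: convex_alt)
  qed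
  have "(F has_derivative F' z) (at z within p ` {0..1})" if "z \<in> p ` {0..1}" for z
    using that p_in by (blast intro: has_derivative_subset[OF F_deriv[rule_format]])
  then have "continuous_on (p ` {0..1}) F"
    unfolding continuous_on_eq_continuous_within by (meson has_derivative_continuous)
  then have "continuous_on {0..1} (F \<circ> p)"
    by (intro continuous_on_compose) (auto simp: p_def intro!: continuous_intros)
  then have R_cont: "continuous_on {0..1} R"
    unfolding R_def o_def by (intro continuous_intros)
  have R_deriv: "(R has_vector_derivative F' (p t) (y - x) - F' x (y - x)) (at t)"
    if t: "0 < t" "t < 1" for t
  proof -
    interpret linear "F' (p t)"
      using t p_in F'_lin by (auto intro!: bounded_linear.linear)
    have "(F \<circ> p has_derivative F' (p t) \<circ> (\<lambda>s. 0 + s *\<^sub>R (y - x))) (at t within {0<..<1})"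
      unfolding p_def
      by (intro derivative_intros has_derivative_subset[OF F_deriv[rule_format]]) (use t p_in[unfolded p_def] in auto)
    then have "(F \<circ> p has_vector_derivative F' (p t) (y - x)) (at t)"
      using t by (simp add: at_within_open[of t "{0<..<1}"] scaleR has_vector_derivative_def o_def)
    then show ?thesis
      unfolding R_def o_def by (auto intro!: derivative_eq_intros)
  qed
  have R'_bound: "norm (F' (p t) (y - x) - F' x (y - x)) \<le> t * L * norm (y - x)^2"
    if t: "0 < t" "t < 1" for t
  proof -
    have pt: "p t \<in> C" using p_in t by auto
    have "norm (F' (p t) (y - x) - F' x (y - x)) \<le> onorm (\<lambda>w. F' (p t) w - F' x w) * norm (y - x)"
      using onorm[OF bounded_linear_sub] pt x F'_lin by auto
    also have "\<dots> \<le> L * norm (p t - x) * norm (y - x)"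
      using F'_lip pt x by (auto intro: mult_right_mono)
    also have "\<dots> = t * L * norm (y - x)^2"
      using t by (simp add: p_def power2_eq_square)
    finally show ?thesis .
  qed
  define \<phi> where "\<phi> t = t\<^sup>2 / 2 * L * norm (y - x)^2" for t
  have "continuous_on {0..1} \<phi>"
    unfolding \<phi>_def by (intro continuous_intros) auto
  moreover have "(\<phi> has_vector_derivative t * L * norm (y - x)^2) (at t)" for t
    unfolding \<phi>_def by (auto simp: has_vector_derivative_def intro!: derivative_eq_intros)
  ultimately have "norm (R 1 - R 0) \<le> \<phi> 1 - \<phi> 0"
    using differentiable_bound_general[OF zero_less_one R_cont _ R_deriv _ R'_bound] by blast
  then show ?thesis
    by (simp add: R_def p_def \<phi>_def linearization_def algebra_simps)
qed

lemma monotone_derivative_nonneg: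
  fixes F :: "'a::real_inner \<Rightarrow> 'a"
  assumes C: "convex C"
    and F_deriv: "\<forall>u\<in>C. (F has_derivative F' u) (at u within C)"
    and F'_lin: "\<forall>u\<in>C. bounded_linear (F' u)"
    and F'_lip: "\<forall>u\<in>C. \<forall>v\<in>C. onorm (\<lambda>w. F' u w - F' v w) \<le> L * norm (u - v)"
    and F_mono: "\<forall>u\<in>C. \<forall>v\<in>C. inner (F u - F v) (u - v) \<ge> 0"
    and u: "u \<in> C" and v: "v \<in> C"
  shows "inner (F' u (v - u)) (v - u) \<ge> 0"
proof (rule tendsto_upperbound)
  define d where "d = v - u"
  define K where "K = L / 2 * norm d ^ 3"
  show "((\<lambda>t. - K * t) \<longlongrightarrow> 0) (at_right 0)"
    by (auto intro!: tendsto_eq_intros)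
  have "- K * t \<le> inner (F' u d) d" if t: "0 < t" "t \<le> 1" for t
  proof -
    define z where "z = u + t *\<^sub>R d"
    have "z = (1 - t) *\<^sub>R u + t *\<^sub>R v" by (simp add: z_def d_def algebra_simps)
    then have z: "z \<in> C" using C u v t by (simp add: convex_alt)
    define E where "E = F z - linearization F F' u z"
    have "norm E \<le> L / 2 * t^2 * norm d ^ 2"
      using linearization_error_bound[OF C F_deriv F'_lin F'_lip u z] t
      by (simp add: E_def z_def power_mult_distrib)
    then have "inner E d \<le> L / 2 * t^2 * norm d ^ 2 * norm d"
      by (meson norm_cauchy_schwarz mult_right_mono norm_ge_zero order_trans)
    moreover have "F' u (t *\<^sub>R d) = t *\<^sub>R F' u d"
      using F'_lin u by (simp add: linear_simps)
    then have "inner (F z - F u) (z - u) = t\<^sup>2 * inner (F' u d) d + t * inner E d"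
      by (simp add: E_def z_def linearization_def inner_diff_left inner_add_left
          power2_eq_square algebra_simps)
    moreover have "0 \<le> inner (F z - F u) (z - u)"
      using F_mono z u by blast
    ultimately have "0 \<le> t\<^sup>2 * (inner (F' u d) d + K * t)"
      using t by (auto simp: K_def algebra_simps power2_eq_square power3_eq_cube
          intro: order_trans mult_left_mono)
    then show ?thesis
      using t by (simp add: zero_le_mult_iff)
  qed
  then show "\<forall>\<^sub>F t in at_right 0. - K * t \<le> inner (F' u (v - u)) (v - u)"
    unfolding eventually_at_right_field d_def by (intro exI[of _ 1]) auto
qed simp

lemma normal_cone_imp_mem: "\<nu> \<in> normal_cone C y \<Longrightarrow> y \<in> C"
  by (simp add: normal_cone_def split: if_splits)

lemma zero_in_normal_cone: "y \<in> C \<Longrightarrow> 0 \<in> normal_cone C y"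
  by (simp add: normal_cone_def)

lemma normal_cone_monotone:
  assumes "\<nu> \<in> normal_cone C y" and "\<nu>' \<in> normal_cone C y'"
  shows "inner (\<nu> - \<nu>') (y - y') \<ge> 0"
proof -
  have "y \<in> C" "y' \<in> C"
    using assms by (auto intro: normal_cone_imp_mem)
  then have "inner \<nu> (y' - y) \<le> 0" "inner \<nu>' (y - y') \<le> 0"
    using assms by (auto simp: normal_cone_def)
  then show ?thesis
    by (simp add: inner_diff_left inner_diff_right inner_commute)
qed

lemma inexact_newton_step_length:
  assumes F'_mono: "inner (F' y' (y - y')) (y - y') \<ge> 0"
    and \<nu>: "\<nu> \<in> normal_cone C y" and \<nu>': "\<nu>' \<in> normal_cone C y'"
    and lam: "lam \<ge> 0"
    and err: "norm (lam *\<^sub>R (linearization F F' y' y + \<nu>) + y - x) \<le> sh * norm (y - y')"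
  shows "(1 - sh) * norm (y - y') \<le> norm (lam *\<^sub>R (F y' + \<nu>') + y' - x)"
proof -
  define d where "d = y - y'"
  define e where "e = lam *\<^sub>R (linearization F F' y' y + \<nu>) + y - x"
  define w where "w = lam *\<^sub>R (F y' + \<nu>') + y' - x"
  have "e - w = lam *\<^sub>R F' y' d + lam *\<^sub>R (\<nu> - \<nu>') + d"
    by (simp add: e_def w_def d_def linearization_def algebra_simps)
  then have "inner (e - w) d = lam * inner (F' y' d) d + lam * inner (\<nu> - \<nu>') d + norm d ^ 2"
    by (simp add: inner_add_left power2_norm_eq_inner)
  then have "norm d ^ 2 \<le> inner (e - w) d"
    using F'_mono normal_cone_monotone[OF \<nu> \<nu>'] lam by (simp add: d_def)
  also have "\<dots> \<le> (norm e + norm w) * norm d"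
    by (meson norm_cauchy_schwarz norm_triangle_ineq4 mult_right_mono norm_ge_zero order_trans)
  also have "\<dots> \<le> (sh * norm d + norm w) * norm d"
    using err by (intro mult_right_mono) (auto simp: e_def d_def)
  finally have "norm d \<le> sh * norm d + norm w"
    by (cases "norm d = 0") (auto simp: power2_eq_square)
  then show ?thesis
    by (simp add: d_def w_def algebra_simps)
qed

text \<open>With \<open>s = \<lambda> L / 2 \<cdot> \<parallel>y - y'\<parallel> \<le> \<theta> / (1 - \<hat>\<sigma>)\<close> by the step length bound, the Taylor bound
  gives at most \<open>\<hat>\<sigma> s + s\<^sup>2 \<le> \<hat>\<theta>\<close>.\<close>
lemma inexact_newton_step:
  fixes F :: "'a::real_inner \<Rightarrow> 'a"
  assumes C: "convex C"
    and F_deriv: "\<forall>u\<in>C. (F has_derivative F' u) (at u within C)"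
    and F'_lin: "\<forall>u\<in>C. bounded_linear (F' u)"
    and F'_lip: "\<forall>u\<in>C. \<forall>v\<in>C. onorm (\<lambda>w. F' u w - F' v w) \<le> L * norm (u - v)"
    and F_mono: "\<forall>u\<in>C. \<forall>v\<in>C. inner (F u - F v) (u - v) \<ge> 0"
    and L: "L > 0" and sh: "0 \<le> sh" "sh < 1"
    and \<nu>: "\<nu> \<in> normal_cone C y" and \<nu>': "\<nu>' \<in> normal_cone C y'"
    and lam: "lam > 0"
    and start: "lam * L / 2 * norm (lam *\<^sub>R (F y' + \<nu>') + y' - x) \<le> th"
    and err: "norm (lam *\<^sub>R (linearization F F' y' y + \<nu>) + y - x) \<le> sh * norm (y - y')"
  shows "lam * L / 2 * norm (lam *\<^sub>R (F y + \<nu>) + y - x) \<le> theta_hat sh th"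
proof -
  have y: "y \<in> C" and y': "y' \<in> C"
    using \<nu> \<nu>' by (auto intro: normal_cone_imp_mem)
  define m where "m = lam * L / 2"
  define s where "s = m * norm (y - y')"
  have m: "m > 0" using lam L by (simp add: m_def)
  have "(1 - sh) * s \<le> m * norm (lam *\<^sub>R (F y' + \<nu>') + y' - x)"
    using inexact_newton_step_length[OF monotone_derivative_nonneg[OF C F_deriv F'_lin F'_lip F_mono y' y]
        \<nu> \<nu>' _ err] lam m
    by (simp add: s_def mult.left_commute)
  then have s_le: "s \<le> th / (1 - sh)"
    using start sh by (simp add: m_def field_simps)
  have "lam *\<^sub>R (F y + \<nu>) + y - x
      = (lam *\<^sub>R (linearization F F' y' y + \<nu>) + y - x) + lam *\<^sub>R (F y - linearization F F' y' y)"
    by (simp add: algebra_simps)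
  then have "norm (lam *\<^sub>R (F y + \<nu>) + y - x)
      \<le> norm (lam *\<^sub>R (linearization F F' y' y + \<nu>) + y - x) + lam * norm (F y - linearization F F' y' y)"
    using norm_triangle_ineq lam by (metis abs_of_pos norm_scaleR)
  also have "\<dots> \<le> sh * norm (y - y') + lam * (L / 2 * norm (y - y')^2)"
    using err linearization_error_bound[OF C F_deriv F'_lin F'_lip y' y] lam
    by (intro add_mono mult_left_mono) auto
  finally have "m * norm (lam *\<^sub>R (F y + \<nu>) + y - x) \<le> sh * s + s\<^sup>2"
    using m by (auto simp: s_def m_def power2_eq_square algebra_simps dest: mult_left_mono[of _ _ m])
  also have "\<dots> \<le> sh * (th / (1 - sh)) + (th / (1 - sh))\<^sup>2"
    using s_le sh m by (intro add_mono mult_left_mono power_mono) (auto simp: s_def)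
  also have "\<dots> = theta_hat sh th"
    using sh by (simp add: theta_hat_def field_simps power2_eq_square)
  finally show ?thesis by (simp add: m_def)
qed

lemma theta_hat_bounds:
  assumes sh: "0 \<le> sh" "sh < 1/2" and th: "0 < th" "th < (1 - sh) * (1 - 2 * sh)"
  shows "0 \<le> theta_hat sh th" and "theta_hat sh th < th"
proof -
  show "0 \<le> theta_hat sh th"
    using sh th by (simp add: theta_hat_def)
  have q: "0 < (1 - sh)\<^sup>2"
    using sh by simp
  have "sh / (1 - sh) = sh * (1 - sh) / (1 - sh)\<^sup>2"
    using sh by (simp add: power2_eq_square)
  then have "sh / (1 - sh) + th / (1 - sh)\<^sup>2 = (sh * (1 - sh) + th) / (1 - sh)\<^sup>2"
    by (simp add: add_divide_distrib)
  also have "\<dots> < 1"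
    using th q by (simp add: power2_eq_square algebra_simps)
  finally have "sh / (1 - sh) + th / (1 - sh)\<^sup>2 < 1" .
  then show "theta_hat sh th < th"
    using th by (simp add: theta_hat_def)
qed

text \<open>\<open>\<tau>\<close> is the smaller root of \<open>\<theta> t\<^sup>2 - (2\<theta> + \<eta>L/2) t + (\<theta> - \<hat>\<theta>) = 0\<close>, written in
  rationalised form.\<close>
lemma tau_param_root:
  assumes th: "0 < th" and thh: "0 \<le> theta_hat sh th" "theta_hat sh th < th"
    and etaL: "0 < eta * L"
  shows "0 < tau_param sh th eta L" and "tau_param sh th eta L < 1"
    and "theta_hat sh th + tau_param sh th eta L * (eta * L / 2) = th * (1 - tau_param sh th eta L)\<^sup>2"
proof -
  define tau where "tau = tau_param sh th eta L"
  define b where "b = 2 * th + eta * L / 2"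
  define c where "c = th - theta_hat sh th"
  define s where "s = sqrt (b\<^sup>2 - 4 * th * c)"
  have b: "2 * th < b" and c: "0 < c" "c \<le> th"
    using etaL thh by (auto simp: b_def c_def)
  have "4 * th * c \<le> (2 * th)\<^sup>2"
    using th c by (simp add: power2_eq_square)
  also have "\<dots> \<le> b\<^sup>2"
    using th b by (intro power_mono) auto
  finally have s: "0 \<le> s" "s\<^sup>2 = b\<^sup>2 - 4 * th * c"
    by (auto simp: s_def)
  have bs: "2 * c < b + s"
    using b c s by linarith
  have tau: "tau = 2 * c / (b + s)"
    by (simp add: tau_def tau_param_def Let_def b_def c_def s_def)
  show "0 < tau_param sh th eta L" and "tau_param sh th eta L < 1"
    using bs c by (simp_all add: tau_def[symmetric] tau)
  have "tau * s = 2 * c - tau * b"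
    using bs c by (simp add: tau field_simps)
  then have "tau\<^sup>2 * (b\<^sup>2 - 4 * th * c) = (2 * c - tau * b)\<^sup>2"
    by (metis s(2) power_mult_distrib)
  then have "4 * c * (th * tau\<^sup>2 - b * tau + c) = 0"
    by algebra
  then have "th * tau\<^sup>2 - b * tau + c = 0"
    using c by simp
  then show "theta_hat sh th + tau_param sh th eta L * (eta * L / 2) = th * (1 - tau_param sh th eta L)\<^sup>2"
    by (simp add: tau_def[symmetric] b_def c_def power2_eq_square algebra_simps)
qed

lemma residual_after_large_step:
  fixes v y x :: "'a::real_normed_vector"
  assumes "0 \<le> tau" "tau \<le> 1" "0 \<le> lam" "0 \<le> L"
    and "lam * L / 2 * norm (lam *\<^sub>R v + y - x) \<le> th"
  shows "(1 - tau) * lam * L / 2 * norm (((1 - tau) * lam) *\<^sub>R v + y - (x - (tau * lam) *\<^sub>R v)) \<le> th"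
proof -
  have "((1 - tau) * lam) *\<^sub>R v + y - (x - (tau * lam) *\<^sub>R v) = lam *\<^sub>R v + y - x"
    by (simp add: algebra_simps)
  moreover have "(1 - tau) * (lam * L / 2 * norm (lam *\<^sub>R v + y - x)) \<le> lam * L / 2 * norm (lam *\<^sub>R v + y - x)"
    using assms by (simp add: mult_left_le_one_le)
  ultimately show ?thesis
    using assms(5) by (simp add: algebra_simps)
qed

text \<open>With \<open>\<lambda>' = \<lambda> / (1 - \<tau>)\<close> and \<open>x\<close> unchanged, the new residual \<open>w\<close> and the old one \<open>r\<close>
  satisfy \<open>(1 - \<tau>) w = r - \<tau> (y - x)\<close>.\<close>
lemma residual_after_small_step:
  fixes v y x :: "'a::real_normed_vector"
  assumes tau: "0 \<le> tau" "tau < 1" and lam: "0 < lam" and L: "0 < L"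
    and start: "lam * L / 2 * norm (lam *\<^sub>R v + y - x) \<le> thh"
    and small: "lam * norm (y - x) \<le> eta"
    and tau_root: "thh + tau * (eta * L / 2) = th * (1 - tau)\<^sup>2"
  shows "lam / (1 - tau) * L / 2 * norm ((lam / (1 - tau)) *\<^sub>R v + y - x) \<le> th"
proof -
  define m where "m = lam * L / 2"
  define r where "r = lam *\<^sub>R v + y - x"
  define w where "w = (lam / (1 - tau)) *\<^sub>R v + y - x"
  have m: "0 < m" using lam L by (simp add: m_def)
  have "w = (lam / (1 - tau)) *\<^sub>R v + (y - x)"
    by (simp add: w_def)
  then have "(1 - tau) *\<^sub>R w = lam *\<^sub>R v + (1 - tau) *\<^sub>R (y - x)"
    using tau by (simp only: scaleR_add_right scaleR_scaleR) simp
  also have "\<dots> = r - tau *\<^sub>R (y - x)"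
    by (simp add: r_def algebra_simps)
  finally have "(1 - tau) * norm w = norm (r - tau *\<^sub>R (y - x))"
    using tau by (metis abs_of_nonneg diff_ge_0_iff_ge less_imp_le norm_scaleR)
  also have "\<dots> \<le> norm r + tau * norm (y - x)"
    using norm_triangle_ineq4[of r "tau *\<^sub>R (y - x)"] tau by simp
  finally have w_le: "(1 - tau) * norm w \<le> norm r + tau * norm (y - x)" .
  have "(1 - tau)\<^sup>2 * (lam / (1 - tau) * L / 2 * norm w) = m * ((1 - tau) * norm w)"
    using tau by (simp add: m_def power2_eq_square field_simps)
  also have "\<dots> \<le> m * (norm r + tau * norm (y - x))"
    using m w_le by (simp add: mult_left_mono)
  also have "\<dots> = m * norm r + tau * (L / 2) * (lam * norm (y - x))"
    by (simp add: m_def algebra_simps)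
  also have "\<dots> \<le> thh + tau * (L / 2) * eta"
    using start small tau L by (intro add_mono mult_left_mono) (auto simp: m_def r_def)
  also have "\<dots> = (1 - tau)\<^sup>2 * th"
    using tau_root by (simp add: algebra_simps)
  finally have "(1 - tau)\<^sup>2 * (lam / (1 - tau) * L / 2 * norm w) \<le> (1 - tau)\<^sup>2 * th" .
  then show ?thesis
    using tau by (simp only: w_def mult_le_cancel_left_pos zero_less_power2)
qed

lemma large_step_relative_error:
  fixes r d :: "'a::real_normed_vector"
  assumes eta: "0 < eta" and L: "0 < L" and thh: "0 \<le> thh"
    and r: "lam * L / 2 * norm r \<le> thh" and large: "eta \<le> lam * norm d"
  shows "norm r \<le> 2 * thh / (eta * L) * norm d"
proof -
  have "0 < lam * norm d" using eta large by linarith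
  then have lam: "0 < lam" by (simp add: zero_less_mult_iff)
  have "1 \<le> lam * norm d / eta"
    using large eta by simp
  then have "thh * 1 \<le> thh * (lam * norm d / eta)"
    using thh by (rule mult_left_mono)
  then have "lam * L / 2 * norm r \<le> thh * (lam * norm d / eta)"
    using r by linarith
  also have "\<dots> = lam * L / 2 * (2 * thh / (eta * L) * norm d)"
    using eta L by (simp add: field_simps)
  finally have "lam * L / 2 * norm r \<le> lam * L / 2 * (2 * thh / (eta * L) * norm d)" .
  moreover have "0 < lam * L / 2"
    using lam L by simp
  ultimately show ?thesis
    by (meson mult_le_cancel_left_pos)
qed

lemma idx_Suc_next:
  fixes A :: "nat set"
  assumes A0: "0 \<notin> A" and n: "enat (Suc n) \<le> ecard A"
  shows "idx A (Suc n) \<in> A" and "idx A n < idx A (Suc n)"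
    and "\<And>j. j \<in> A \<Longrightarrow> idx A n < j \<Longrightarrow> idx A (Suc n) \<le> j"
proof -
  have below_card: "finite A \<Longrightarrow> Suc n \<le> card A"
    using n by (simp add: ecard_def)
  show A: "idx A (Suc n) \<in> A"
    using below_card by (cases "finite A") (auto simp: idx_def finite_enumerate_in_set enumerate_in_set)
  show "idx A n < idx A (Suc n)"
  proof (cases n)
    case 0
    then show ?thesis
      using A A0 by (cases "idx A (Suc n)") (auto simp: idx_def)
  next
    case (Suc m)
    then show ?thesis
      using below_card by (cases "finite A") (auto simp: idx_def finite_enumerate_step enumerate_step)
  qed
  have "idx A (Suc n) = (LEAST j. j \<in> A \<and> idx A n < j)"
  proof (cases n)
    case 0
    then show ?thesis
      using A0 by (simp add: idx_def enumerate_0) (metis gr0I)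
  next
    case (Suc m)
    then show ?thesis
      using below_card by (cases "finite A") (auto simp: idx_def finite_enumerate_Suc'' enumerate_Suc'')
  qed
  then show "\<And>j. j \<in> A \<Longrightarrow> idx A n < j \<Longrightarrow> idx A (Suc n) \<le> j"
    by (simp add: Least_le)
qed
locale algorithm2_run =
  fixes C :: "'a::real_inner set" and F :: "'a \<Rightarrow> 'a" and F' :: "'a \<Rightarrow> 'a \<Rightarrow> 'a"
    and L sh th eta :: real
    and x y nu :: "nat \<Rightarrow> 'a" and lam :: "nat \<Rightarrow> real"
  assumes C_convex: "convex C"
    and F_mono: "\<forall>u\<in>C. \<forall>v\<in>C. inner (F u - F v) (u - v) \<ge> 0"
    and F_deriv: "\<forall>u\<in>C. (F has_derivative F' u) (at u within C)"
    and F'_lin: "\<forall>u\<in>C. bounded_linear (F' u)"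
    and L_pos: "L > 0"
    and F'_lip: "\<forall>u\<in>C. \<forall>v\<in>C. onorm (\<lambda>w. F' u w - F' v w) \<le> L * norm (u - v)"
    and sh: "0 \<le> sh" "sh < 1/2"
    and th: "0 < th" "th < (1 - sh) * (1 - 2 * sh)"
    and eta: "eta > 2 * theta_hat sh th / L"
    and alg: "algorithm2 C F F' L sh th eta x y nu lam"
begin

abbreviation "thh \<equiv> theta_hat sh th"
abbreviation "tau \<equiv> tau_param sh th eta L"
abbreviation "sg \<equiv> 2 * theta_hat sh th / (eta * L)"
abbreviation "A \<equiv> large_steps x y lam eta"

lemma thh_bounds: "0 \<le> thh" "thh < th"
  using theta_hat_bounds[OF sh th] by auto

lemma eta_pos: "0 < eta"
  using eta thh_bounds L_pos by (smt (verit) divide_nonneg_pos)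

lemma tau_bounds: "0 < tau" "tau < 1"
  using tau_param_root[OF th(1) thh_bounds] eta_pos L_pos by auto

lemma tau_root: "thh + tau * (eta * L / 2) = th * (1 - tau)\<^sup>2"
  using tau_param_root[OF th(1) thh_bounds] eta_pos L_pos by auto

lemma sg_bounds: "0 \<le> sg" "sg < 1"
  using thh_bounds eta eta_pos L_pos by (auto simp: field_simps)

lemma init: "x 0 \<in> C" "y 0 = x 0" "nu 0 = 0" "0 < lam 1" "(lam 1)\<^sup>2 * norm (F (y 0)) \<le> 2 * th / L"
  using alg by (auto simp: algorithm2_def Let_def)

lemma iteration:
  "(if lam (Suc n) * L / 2 * norm (lam (Suc n) *\<^sub>R (F (y n) + nu n) + y n - x n) \<le> thh
    then y (Suc n) = y n \<and> nu (Suc n) = nu n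
    else nu (Suc n) \<in> normal_cone C (y (Suc n)) \<and>
      norm (lam (Suc n) *\<^sub>R (linearization F F' (y n) (y (Suc n)) + nu (Suc n)) + y (Suc n) - x n)
        \<le> sh * norm (y (Suc n) - y n)) \<and>
   (if lam (Suc n) * norm (y (Suc n) - x n) \<ge> eta
    then x (Suc n) = x n - (tau * lam (Suc n)) *\<^sub>R (F (y (Suc n)) + nu (Suc n)) \<and>
      lam (Suc (Suc n)) = (1 - tau) * lam (Suc n)
    else x (Suc n) = x n \<and> lam (Suc (Suc n)) = lam (Suc n) / (1 - tau))"
  using alg unfolding algorithm2_def Let_def by (metis Suc_eq_plus1 diff_Suc_1 le_add2)

lemma newton_phase:
  assumes lam: "0 < lam (Suc n)" and \<nu>: "nu n \<in> normal_cone C (y n)"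
    and start: "lam (Suc n) * L / 2 * norm (lam (Suc n) *\<^sub>R (F (y n) + nu n) + y n - x n) \<le> th"
  shows "nu (Suc n) \<in> normal_cone C (y (Suc n))"
    and "lam (Suc n) * L / 2 * norm (lam (Suc n) *\<^sub>R (F (y (Suc n)) + nu (Suc n)) + y (Suc n) - x n) \<le> thh"
proof -
  have "nu (Suc n) \<in> normal_cone C (y (Suc n)) \<and>
    lam (Suc n) * L / 2 * norm (lam (Suc n) *\<^sub>R (F (y (Suc n)) + nu (Suc n)) + y (Suc n) - x n) \<le> thh"
  proof (cases "lam (Suc n) * L / 2 * norm (lam (Suc n) *\<^sub>R (F (y n) + nu n) + y n - x n) \<le> thh")
    case True
    then show ?thesis
      using iteration[of n] \<nu> by simp
  next
    case False
    then have \<nu>': "nu (Suc n) \<in> normal_cone C (y (Suc n))"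
      and err: "norm (lam (Suc n) *\<^sub>R (linearization F F' (y n) (y (Suc n)) + nu (Suc n)) + y (Suc n) - x n)
          \<le> sh * norm (y (Suc n) - y n)"
      using iteration[of n] by auto
    show ?thesis
      using inexact_newton_step[OF C_convex F_deriv F'_lin F'_lip F_mono L_pos sh(1) _ \<nu>' \<nu> lam start err]
        sh \<nu>' by simp
  qed
  then show "nu (Suc n) \<in> normal_cone C (y (Suc n))"
    and "lam (Suc n) * L / 2 * norm (lam (Suc n) *\<^sub>R (F (y (Suc n)) + nu (Suc n)) + y (Suc n) - x n) \<le> thh"
    by auto
qed

lemma residual_invariant:
  "0 < lam (Suc n) \<and> nu n \<in> normal_cone C (y n) \<and>
   lam (Suc n) * L / 2 * norm (lam (Suc n) *\<^sub>R (F (y n) + nu n) + y n - x n) \<le> th"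
proof (induction n)
  case 0
  have "lam 1 * L / 2 * norm (lam 1 *\<^sub>R (F (y 0) + nu 0) + y 0 - x 0) = L / 2 * ((lam 1)\<^sup>2 * norm (F (y 0)))"
    using init by (simp add: power2_eq_square)
  also have "\<dots> \<le> th"
    using init L_pos by (simp add: field_simps)
  finally show ?case
    using init zero_in_normal_cone by simp
next
  case (Suc n)
  then have lam: "0 < lam (Suc n)" by simp
  note newton = newton_phase[of n, OF lam] Suc
  show ?case
  proof (cases "lam (Suc n) * norm (y (Suc n) - x n) \<ge> eta")
    case True
    then show ?thesis
      using iteration[of n] newton thh_bounds tau_bounds lam L_pos
        residual_after_large_step[of tau "lam (Suc n)" L "F (y (Suc n)) + nu (Suc n)" "y (Suc n)" "x n" th]
      by auto
  next
    case False
    then show ?thesis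
      using iteration[of n] newton tau_bounds tau_root lam L_pos
        residual_after_small_step[of tau "lam (Suc n)" L "F (y (Suc n)) + nu (Suc n)" "y (Suc n)" "x n" thh eta th]
      by auto
  qed
qed

lemma large_step_hpe_conditions:
  assumes "Suc p \<in> A"
  shows "0 < lam (Suc p)" and "nu (Suc p) \<in> normal_cone C (y (Suc p))"
    and "norm (lam (Suc p) *\<^sub>R (F (y (Suc p)) + nu (Suc p)) + y (Suc p) - x p) \<le> sg * norm (y (Suc p) - x p)"
    and "eta \<le> lam (Suc p) * norm (y (Suc p) - x p)"
    and "x (Suc p) = x p - (tau * lam (Suc p)) *\<^sub>R (F (y (Suc p)) + nu (Suc p))"
proof -
  show large: "eta \<le> lam (Suc p) * norm (y (Suc p) - x p)"
    using assms by (simp add: large_steps_def)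
  show "0 < lam (Suc p)" and "nu (Suc p) \<in> normal_cone C (y (Suc p))"
    using residual_invariant newton_phase by auto
  show "norm (lam (Suc p) *\<^sub>R (F (y (Suc p)) + nu (Suc p)) + y (Suc p) - x p) \<le> sg * norm (y (Suc p) - x p)"
    using large_step_relative_error[OF eta_pos L_pos thh_bounds(1) _ large] residual_invariant newton_phase by auto
  show "x (Suc p) = x p - (tau * lam (Suc p)) *\<^sub>R (F (y (Suc p)) + nu (Suc p))"
    using iteration[of p] large by auto
qed

lemma x_constant_between_large_steps:
  assumes "a \<le> b" and "\<And>j. a < j \<Longrightarrow> j \<le> b \<Longrightarrow> j \<notin> A"
  shows "x b = x a"
  using assms
proof (induction b rule: dec_induct)
  case (step p)
  then have "Suc p \<notin> A" by simp
  then have "x (Suc p) = x p"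
    using iteration[of p] by (auto simp: large_steps_def)
  then show ?case using step by simp
qed simp

lemma large_step_subsequence:
  assumes k: "1 \<le> k" "enat k \<le> ecard A"
  shows "0 < lam (idx A k) \<and> nu (idx A k) \<in> normal_cone C (y (idx A k)) \<and>
    norm (lam (idx A k) *\<^sub>R (F (y (idx A k)) + nu (idx A k)) + y (idx A k) - x (idx A (k - 1)))
      \<le> sg * norm (y (idx A k) - x (idx A (k - 1))) \<and>
    eta \<le> lam (idx A k) * norm (y (idx A k) - x (idx A (k - 1))) \<and>
    x (idx A k) = x (idx A (k - 1)) - (tau * lam (idx A k)) *\<^sub>R (F (y (idx A k)) + nu (idx A k))"
proof -
  obtain n where n: "k = Suc n" using k by (cases k) auto
  have "0 \<notin> A" by (simp add: large_steps_def)
  note next_idx = idx_Suc_next[OF this k(2)[unfolded n]]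
  obtain p where p: "idx A (Suc n) = Suc p"
    using next_idx(2) by (cases "idx A (Suc n)") auto
  have "x p = x (idx A n)"
    using next_idx p by (intro x_constant_between_large_steps) fastforce+
  then show ?thesis
    using large_step_hpe_conditions[of p] next_idx(1) p n by simp
qed

end

theorem proposition4p5:
  fixes C :: "'a::{real_inner, complete_space} set"
    and F :: "'a \<Rightarrow> 'a" and F' :: "'a \<Rightarrow> 'a \<Rightarrow> 'a"
    and L sh th eta :: real
    and x y nu :: "nat \<Rightarrow> 'a" and lam :: "nat \<Rightarrow> real"
  assumes C_ne: "C \<noteq> {}" and C_closed: "closed C" and C_convex: "convex C"
    and F_mono: "\<forall>u\<in>C. \<forall>v\<in>C. inner (F u - F v) (u - v) \<ge> 0"
    and F_deriv: "\<forall>u\<in>C. (F has_derivative F' u) (at u within C)"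
    and F'_lin: "\<forall>u\<in>C. bounded_linear (F' u)"
    and F'_cont: "continuous_on C (\<lambda>u. Blinfun (F' u))"
    and L_pos: "L > 0"
    and F'_lip: "\<forall>u\<in>C. \<forall>v\<in>C. onorm (\<lambda>w. F' u w - F' v w) \<le> L * norm (u - v)"
    and sol: "\<exists>z. z \<in> C \<and> - F z \<in> normal_cone C z"
    and sh: "0 \<le> sh" "sh < 1/2"
    and th: "0 < th" "th < (1 - sh) * (1 - 2 * sh)"
    and eta: "eta > 2 * theta_hat sh th / L"
    and alg: "algorithm2 C F F' L sh th eta x y nu lam"
    and nostop: "\<forall>k\<ge>1. F (y (k-1)) + nu (k-1) \<noteq> 0"
  shows "(let sg = 2 * theta_hat sh th / (eta * L);
              tau = tau_param sh th eta L;
              A = large_steps x y lam eta;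
              i = idx A
          in sg < 1 \<and>
             (\<forall>k. k \<ge> 1 \<and> enat k \<le> ecard A \<longrightarrow>
                nu (i k) \<in> normal_cone C (y (i k)) \<and>
                norm (lam (i k) *\<^sub>R (F (y (i k)) + nu (i k)) + y (i k) - x (i (k-1)))
                  \<le> sg * norm (y (i k) - x (i (k-1))) \<and>
                lam (i k) * norm (y (i k) - x (i (k-1))) \<ge> eta \<and>
                x (i k) = x (i (k-1)) - (tau * lam (i k)) *\<^sub>R (F (y (i k)) + nu (i k))) \<and>
             hpe_run C F tau sg eta (ecard A) (x \<circ> i) (y \<circ> i) (nu \<circ> i) (lam \<circ> i))"
proof -
  \<comment> \<open>\<open>C_ne\<close>, \<open>C_closed\<close>, \<open>F'_cont\<close>, \<open>sol\<close> and \<open>nostop\<close> are only needed for the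
    convergence analysis, not for this step.\<close>
  interpret algorithm2_run C F F' L sh th eta x y nu lam
    using C_convex F_mono F_deriv F'_lin L_pos F'_lip sh th eta alg by unfold_locales
  show ?thesis
    using sg_bounds tau_bounds eta_pos large_step_subsequence
    unfolding Let_def hpe_run_def by auto
qed

end
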